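(* Let $(S_n)_{n\geq 0}$ be the simple random walk on $\mathbf{Z}$, i.e. $S_n=X_1+\cdots+X_n$ where $(X_k)_{k\geq 1}$ is a sequence of independent random variables with $\mathbf{P}(X_k=1)=\mathbf{P}(X_k=-1)=\tfrac12$. Let $\varepsilon$ be a real number with $0<\varepsilon\leq 1/4$. Then for any odd integer $q\geq 1$ and any integer $a$ coprime with $q$, we have $$\mathbf{P}(S_n \text{ is prime and } S_n\equiv a \pmod q)\ll \frac{1}{\varphi(q)}\,\frac{1}{\log n}$$ for all integers $n\geq 2$ with $q\leq n^{1/4-\varepsilon}$, where the implied constant depends only on $\varepsilon$.
   Context: $\varphi$ denotes Euler's function. The notation $A\ll B$ means $|A|\leq CB$ for some constant $C$ (the implied constant). *)

theory Defs
  imports "HOL-Probability.Probability" "HOL-Number_Theory.Number_Theory"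
begin

definition srw_step :: "int pmf" where
  "srw_step = pmf_of_set {-1, 1}"

definition srw :: "nat \<Rightarrow> int pmf" where
  "srw n = map_pmf (\<lambda>X. \<Sum>k\<in>{1..n}. X k) (Pi_pmf {1..n} 0 (\<lambda>_. srw_step))"

end

theory Submission
  imports Defs "HOL-Analysis.Harmonic_Numbers" "HOL-Computational_Algebra.Squarefree"
begin

text \<open>Since \<open>S\<^sub>n = 2 B - n\<close> with \<open>B\<close> binomial, every point mass of \<open>S\<^sub>n\<close> is at most \<open>1 / \<surd>n\<close>, and
  on \<open>s \<ge> 0\<close> the point masses decrease within each parity class. Cutting the positive axis into
  blocks of length \<open>y \<approx> \<surd>n\<close>, the mass at a point of a block is therefore at most the average mass of
  the previous block, so \<open>P(S\<^sub>n \<in> E) \<le> (3 / \<surd>n) K\<close> whenever every block contains at most \<open>K\<close>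
  elements of \<open>E\<close>. For the primes \<open>\<equiv> a (mod q)\<close>, Selberg's upper bound sieve of level
  \<open>R = n\<^sup>1\<^sup>/\<^sup>1\<^sup>6\<close> gives \<open>K = O(y / (\<phi>(q) log n))\<close> as long as \<open>q \<le> n\<^sup>1\<^sup>/\<^sup>4\<^sup>-\<^sup>\<epsilon>\<close>.\<close>

section \<open>The law of the walk\<close>

lemma srw_step_eq_bernoulli: "srw_step = map_pmf (\<lambda>b. if b then 1 else -1) (bernoulli_pmf (1/2))"
proof -
  have "map_pmf (\<lambda>b. if b then (1::int) else -1) (pmf_of_set UNIV)
      = pmf_of_set ((\<lambda>b. if b then (1::int) else -1) ` UNIV)"
    by (rule map_pmf_of_set_inj) (auto simp: inj_on_def)
  moreover have "(\<lambda>b. if b then (1::int) else -1) ` UNIV = {-1, 1}" by auto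
  ultimately show ?thesis
    unfolding srw_step_def bernoulli_pmf_half_conv_pmf_of_set by simp
qed

lemma srw_Suc: "srw (Suc n) = map_pmf (\<lambda>(y, s). y + s) (pair_pmf srw_step (srw n))"
proof -
  let ?P = "\<lambda>n. Pi_pmf {1..n} 0 (\<lambda>_. srw_step)"
  have "?P (Suc n) = map_pmf (\<lambda>(y, f). f(Suc n := y)) (pair_pmf srw_step (?P n))"
    using Pi_pmf_insert[of "{1..n}" "Suc n" 0 "\<lambda>_. srw_step"] by (simp add: atLeastAtMostSuc_conv)
  then have "srw (Suc n) = map_pmf (\<lambda>X. \<Sum>k\<in>{1..Suc n}. X k)
      (map_pmf (\<lambda>(y, f). f(Suc n := y)) (pair_pmf srw_step (?P n)))"
    unfolding srw_def by simp
  also have "\<dots> = map_pmf (\<lambda>(y, f). y + (\<Sum>k\<in>{1..n}. f k)) (pair_pmf srw_step (?P n))"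
    unfolding pmf.map_comp by (intro map_pmf_cong refl) (auto simp: atLeastAtMostSuc_conv)
  also have "\<dots> = map_pmf (\<lambda>(y, s). y + s) (pair_pmf srw_step (srw n))"
    unfolding srw_def pair_map_pmf2 pmf.map_comp by (intro map_pmf_cong refl) auto
  finally show ?thesis .
qed

lemma srw_eq_binomial: "srw n = map_pmf (\<lambda>k. 2 * int k - int n) (binomial_pmf n (1/2))"
proof (induction n)
  case 0
  then show ?case unfolding srw_def by (simp add: binomial_pmf_0)
next
  case (Suc n)
  have "binomial_pmf (Suc n) (1/2) = do {b \<leftarrow> bernoulli_pmf (1/2); k \<leftarrow> binomial_pmf n (1/2);
                                        return_pmf ((if b then 1 else 0) + k)}"
    by (rule binomial_pmf_Suc) auto
  then show ?case
    unfolding srw_Suc Suc srw_step_eq_bernoulli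
    by (auto simp: pair_pmf_def map_pmf_def bind_assoc_pmf bind_return_pmf algebra_simps
             intro!: bind_pmf_cong)
qed

lemma Suc_times_binomial_odd: "Suc m * ((2 * m + 1) choose m) = (2 * m + 1) * ((2 * m) choose m)"
  using binomial_absorb_comp[of "2 * m + 1" m] by simp

lemma central_binomial_Suc:
  "real (Suc m) * real ((2 * Suc m) choose Suc m) = 2 * (2 * real m + 1) * real ((2 * m) choose m)"
proof -
  define X where "X = (2 * Suc m) choose Suc m"
  define B where "B = (2 * m + 1) choose m"
  define c where "c = (2 * m) choose m"
  have X: "Suc m * X = (2 * m + 2) * B"
    using Suc_times_binomial_eq[of "2 * m + 1" m] unfolding X_def B_def by (simp add: mult.commute)
  have B: "Suc m * B = (2 * m + 1) * c"
    using Suc_times_binomial_odd unfolding B_def c_def .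
  have "Suc m * (Suc m * X) = (2 * m + 2) * (Suc m * B)" by (simp only: X mult.left_commute)
  also have "\<dots> = Suc m * (2 * (2 * m + 1) * c)" by (simp only: B) simp
  finally have "Suc m * X = 2 * (2 * m + 1) * c" by (metis mult_left_cancel Zero_not_Suc)
  then have "real (Suc m * X) = real (2 * (2 * m + 1) * c)" by (rule arg_cong)
  then show ?thesis
    unfolding X_def c_def by (simp only: of_nat_mult of_nat_add of_nat_numeral of_nat_1)
qed

lemma central_binomial_sq_le: "real ((2 * m) choose m) ^ 2 * (2 * m + 1) \<le> 16 ^ m"
proof (induction m)
  case (Suc m)
  define u where "u = real m"
  define c where "c = real ((2 * m) choose m)"
  define c' where "c' = real ((2 * Suc m) choose Suc m)"
  have rec: "(u + 1) * c' = 2 * (2 * u + 1) * c"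
    using central_binomial_Suc[of m] unfolding u_def c_def c'_def by (metis add.commute of_nat_Suc)
  have "(u + 1) ^ 2 * (c' ^ 2 * (2 * u + 3)) = ((u + 1) * c') ^ 2 * (2 * u + 3)"
    by (simp add: power_mult_distrib)
  also have "\<dots> = 4 * (2 * u + 1) * c ^ 2 * ((2 * u + 1) * (2 * u + 3))"
    unfolding rec by (simp add: power2_eq_square algebra_simps)
  also have "\<dots> \<le> 4 * (2 * u + 1) * c ^ 2 * (4 * (u + 1) ^ 2)"
    by (intro mult_left_mono mult_nonneg_nonneg) (simp_all add: u_def power2_eq_square algebra_simps)
  also have "\<dots> = (u + 1) ^ 2 * (16 * (c ^ 2 * (2 * u + 1)))"
    by (simp add: power2_eq_square algebra_simps)
  finally have "c' ^ 2 * (2 * u + 3) \<le> 16 * (c ^ 2 * (2 * u + 1))"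
    by (rule mult_left_le_imp_le) (simp add: u_def)
  also have "\<dots> \<le> 16 * 16 ^ m"
    using Suc.IH unfolding c_def u_def by (simp add: add.commute)
  finally show ?case
    unfolding c'_def u_def by (simp add: add.commute)
qed simp

lemma central_binomial_div_le:
  assumes "1 \<le> n"
  shows "real (n choose (n div 2)) / 2 ^ n \<le> 1 / sqrt n"
proof -
  obtain m where m: "n div 2 = m" by simp
  define c where "c = real ((2 * m) choose m)"
  have "c ^ 2 * (2 * m + 1) \<le> 4 ^ m * 4 ^ m"
    using central_binomial_sq_le[of m] unfolding c_def by (simp flip: power_mult_distrib)
  then have central: "(c / 4 ^ m) ^ 2 \<le> 1 / (2 * m + 1)"
    by (simp add: power_divide field_simps power2_eq_square)
  have "(real (n choose m) / 2 ^ n) ^ 2 \<le> 1 / n"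
  proof (cases "even n")
    case True
    then have n: "n = 2 * m" using m by presburger
    have "(real (n choose m) / 2 ^ n) ^ 2 \<le> 1 / (2 * m + 1)"
      using central unfolding n c_def by (simp add: power_mult)
    also have "\<dots> \<le> 1 / n" using n assms by (intro divide_left_mono) auto
    finally show ?thesis .
  next
    case False
    then have n: "n = 2 * m + 1" using m by presburger
    have "real (Suc m) * real (n choose m) = real (2 * m + 1) * c"
      using Suc_times_binomial_odd[of m] unfolding n c_def by (metis of_nat_mult)
    also have "\<dots> \<le> real (Suc m) * (2 * c)" by (simp add: c_def)
    finally have "real (n choose m) \<le> 2 * c" by (rule mult_left_le_imp_le) simp
    then have "(real (n choose m) / 2 ^ n) ^ 2 \<le> (2 * c / 2 ^ n) ^ 2"
      by (intro power_mono divide_right_mono) auto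
    also have "\<dots> = (c / 4 ^ m) ^ 2" unfolding n by (simp add: power_mult)
    also have "\<dots> \<le> 1 / n" using central n by simp
    finally show ?thesis .
  qed
  then have "sqrt ((real (n choose m) / 2 ^ n) ^ 2) \<le> sqrt (1 / n)"
    by (rule real_sqrt_le_mono)
  then show ?thesis using m by (simp add: real_sqrt_divide)
qed

lemma pmf_srw_binomial: "pmf (srw n) (2 * int k - int n) = real (n choose k) / 2 ^ n"
proof -
  have "inj (\<lambda>k::nat. 2 * int k - int n)" by (auto simp: inj_on_def)
  then have "pmf (srw n) (2 * int k - int n) = pmf (binomial_pmf n (1/2)) k"
    unfolding srw_eq_binomial by (rule pmf_map_inj')
  also have "\<dots> = real (n choose k) / 2 ^ n"
  proof (cases "k \<le> n")
    case True
    then have "(1/2::real) ^ k * (1/2) ^ (n - k) = (1/2) ^ n" by (simp flip: power_add)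
    then show ?thesis by (simp add: power_one_over field_simps)
  qed (simp add: binomial_eq_0)
  finally show ?thesis .
qed

lemma pmf_srw_eq_0:
  assumes "\<And>k. s \<noteq> 2 * int k - int n"
  shows "pmf (srw n) s = 0"
  unfolding srw_eq_binomial using assms by (intro pmf_map_outside) auto

lemma pmf_srw_eq_0_if_gt:
  assumes "int n < s"
  shows "pmf (srw n) s = 0"
proof (cases "\<exists>k. s = 2 * int k - int n")
  case True
  then obtain k where k: "s = 2 * int k - int n" by auto
  then have "n < k" using assms by linarith
  then show ?thesis unfolding k pmf_srw_binomial by (simp add: binomial_eq_0)
qed (use pmf_srw_eq_0 in auto)

lemma pmf_srw_le:
  assumes "1 \<le> n"
  shows "pmf (srw n) s \<le> 1 / sqrt n"
proof (cases "\<exists>k. s = 2 * int k - int n")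
  case True
  then obtain k where k: "s = 2 * int k - int n" by auto
  have "pmf (srw n) s \<le> real (n choose (n div 2)) / 2 ^ n"
    unfolding k pmf_srw_binomial by (intro divide_right_mono) (auto simp: binomial_maximum)
  also have "\<dots> \<le> 1 / sqrt n" using assms by (rule central_binomial_div_le)
  finally show ?thesis .
qed (use pmf_srw_eq_0 in auto)

lemma pmf_srw_antimono:
  assumes "0 \<le> t" "t \<le> s" "even (s - t)"
  shows "pmf (srw n) s \<le> pmf (srw n) t"
proof (cases "\<exists>k. s = 2 * int k - int n")
  case True
  then obtain k where k: "s = 2 * int k - int n" by auto
  define i where "i = nat ((t + int n) div 2)"
  have i: "t = 2 * int i - int n" "i \<le> k" "n div 2 \<le> i"
    using assms k unfolding i_def by auto
  have "n choose k \<le> n choose i"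
    using i binomial_antimono by (cases "k \<le> n") (auto simp: binomial_eq_0)
  then show ?thesis unfolding k i(1) pmf_srw_binomial by (intro divide_right_mono) auto
qed (use pmf_srw_eq_0 in auto)

lemma pmf_srw_le_adjacent:
  assumes "1 \<le> t" "t \<le> s"
  shows "pmf (srw n) s \<le> pmf (srw n) t + pmf (srw n) (t - 1)"
proof (cases "even (s - t)")
  case True
  then have "pmf (srw n) s \<le> pmf (srw n) t" using assms by (intro pmf_srw_antimono) auto
  then show ?thesis using pmf_nonneg[of "srw n" "t - 1"] by linarith
next
  case False
  then have "pmf (srw n) s \<le> pmf (srw n) (t - 1)" using assms by (intro pmf_srw_antimono) auto
  then show ?thesis using pmf_nonneg[of "srw n" t] by linarith
qed

section \<open>The walk on short intervals\<close>

lemma sum_pmf_le_1: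
  assumes "finite A"
  shows "(\<Sum>x\<in>A. pmf p x) \<le> 1"
  using measure_measure_pmf_finite[OF assms, of p] measure_pmf.prob_le_1[of p A] by simp

lemma sum_pmf_shift_le_1:
  fixes p :: "int pmf"
  assumes "finite A"
  shows "(\<Sum>t\<in>A. pmf p (t - c)) \<le> 1"
proof -
  have "(\<Sum>t\<in>A. pmf p (t - c)) = (\<Sum>t\<in>(\<lambda>t. t - c) ` A. pmf p t)"
    by (simp add: sum.reindex inj_on_def)
  also have "\<dots> \<le> 1" using assms by (intro sum_pmf_le_1) auto
  finally show ?thesis .
qed

lemma sum_int_blocks:
  fixes h :: "int \<Rightarrow> 'a::comm_monoid_add"
  assumes "0 \<le> Y"
  shows "(\<Sum>j<m. \<Sum>t\<in>{int j * Y<..(int j + 1) * Y}. h t) = (\<Sum>t\<in>{0<..int m * Y}. h t)"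
proof (induction m)
  case (Suc m)
  have interval_split: "{0<..M + Y} = {0<..M} \<union> {M<..M + Y}" if "0 \<le> M" for M
    using that assms by auto
  have "{0<..int (Suc m) * Y} = {0<..int m * Y} \<union> {int m * Y<..(int m + 1) * Y}"
    using interval_split[of "int m * Y"] assms by (simp add: distrib_right add.commute)
  moreover have "{0<..int m * Y} \<inter> {int m * Y<..(int m + 1) * Y} = {}" by auto
  ultimately show ?case using Suc by (simp add: sum.union_disjoint)
qed simp

lemma prob_srw_eq_sum:
  assumes "E \<subseteq> {0<..}" "int n \<le> N"
  shows "measure_pmf.prob (srw n) E = (\<Sum>t\<in>{0<..N}. if t \<in> E then pmf (srw n) t else 0)"
proof -
  have "set_pmf (srw n) \<subseteq> {..int n}"
    using pmf_srw_eq_0_if_gt by (force simp: set_pmf_eq)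
  then have "E \<inter> set_pmf (srw n) \<subseteq> E \<inter> {0<..N}" "E \<inter> {0<..N} \<subseteq> E"
    using assms by (auto simp: subset_eq)
  then have "measure_pmf.prob (srw n) E = measure_pmf.prob (srw n) (E \<inter> {0<..N})"
    using measure_Int_set_pmf[of "srw n" E]
    by (metis antisym measure_pmf.finite_measure_mono sets_measure_pmf UNIV_I)
  also have "\<dots> = (\<Sum>t\<in>E \<inter> {0<..N}. pmf (srw n) t)"
    by (rule measure_measure_pmf_finite) simp
  also have "\<dots> = (\<Sum>t\<in>{0<..N}. if t \<in> E then pmf (srw n) t else 0)"
    by (subst Int_commute, rule sum.inter_restrict) simp
  finally show ?thesis .
qed

lemma pmf_srw_le_interval_average:
  assumes "0 \<le> x" "x + int y \<le> s"
  shows "real y * pmf (srw n) s \<le> (\<Sum>t\<in>{x<..x + int y}. pmf (srw n) t + pmf (srw n) (t - 1))"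
proof -
  have "real y * pmf (srw n) s = (\<Sum>t\<in>{x<..x + int y}. pmf (srw n) s)" by simp
  also have "\<dots> \<le> (\<Sum>t\<in>{x<..x + int y}. pmf (srw n) t + pmf (srw n) (t - 1))"
    using assms by (intro sum_mono pmf_srw_le_adjacent) auto
  finally show ?thesis .
qed

lemma pmf_srw_block_le:
  assumes "1 \<le> n" "0 < y" "s \<in> {int j * int y<..(int j + 1) * int y}"
  shows "pmf (srw n) s \<le> (case j of 0 \<Rightarrow> 1 / sqrt n
    | Suc i \<Rightarrow> (\<Sum>t\<in>{int i * int y<..(int i + 1) * int y}. pmf (srw n) t + pmf (srw n) (t - 1)) / real y)"
proof (cases j)
  case 0
  then show ?thesis using pmf_srw_le assms(1) by simp
next
  case (Suc i)
  have "real y * pmf (srw n) s \<le> (\<Sum>t\<in>{int i * int y<..int i * int y + int y}. pmf (srw n) t + pmf (srw n) (t - 1))"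
    using assms(3) Suc by (intro pmf_srw_le_interval_average) (auto simp: algebra_simps)
  also have "\<dots> = (\<Sum>t\<in>{int i * int y<..(int i + 1) * int y}. pmf (srw n) t + pmf (srw n) (t - 1))"
    by (simp add: algebra_simps)
  finally show ?thesis using Suc assms(2) by (simp add: field_simps)
qed

lemma sum_blocks_pmf_adjacent_le_2:
  fixes p :: "int pmf" and Y :: int
  assumes "0 \<le> Y"
  shows "(\<Sum>j<m. \<Sum>t\<in>{int j * Y<..(int j + 1) * Y}. pmf p t + pmf p (t - 1)) \<le> 2"
proof -
  have "(\<Sum>j<m. \<Sum>t\<in>{int j * Y<..(int j + 1) * Y}. pmf p t + pmf p (t - 1))
      = (\<Sum>t\<in>{0<..int m * Y}. pmf p t) + (\<Sum>t\<in>{0<..int m * Y}. pmf p (t - 1))"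
    unfolding sum.distrib sum_int_blocks[OF assms] ..
  also have "\<dots> \<le> 2"
    using sum_pmf_le_1[of "{0<..int m * Y}" p] sum_pmf_shift_le_1[of "{0<..int m * Y}" p 1] by simp
  finally show ?thesis .
qed

text \<open>Cut \<open>(0, n y]\<close> into blocks of length \<open>y\<close>; on every block but the first, each point mass is at
  most the average mass of the previous block, counting both parities.\<close>

lemma prob_srw_le_interval_count:
  fixes E :: "int set" and K :: real
  assumes "1 \<le> n" "0 < y" "E \<subseteq> {0<..}"
    and count: "\<And>x. real (card {s\<in>E. x < s \<and> s \<le> x + int y}) \<le> K"
  shows "measure_pmf.prob (srw n) E \<le> K * (1 / sqrt n + 2 / real y)"
proof -
  define f where "f = pmf (srw n)"
  define B where "B j = {int j * int y<..(int j + 1) * int y}" for j :: nat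
  define mass where "mass j = (\<Sum>t\<in>B j. f t + f (t - 1))" for j
  define bound where "bound j = (case j of 0 \<Rightarrow> 1 / sqrt n | Suc i \<Rightarrow> mass i / real y)" for j
  have "0 \<le> K" using count[of 0] by (meson of_nat_0_le_iff order_trans)
  have "measure_pmf.prob (srw n) E = (\<Sum>t\<in>{0<..int n * int y}. if t \<in> E then f t else 0)"
    unfolding f_def using assms by (intro prob_srw_eq_sum) auto
  also have "\<dots> = (\<Sum>j<n. \<Sum>t\<in>B j. if t \<in> E then f t else 0)"
    unfolding B_def by (rule sum_int_blocks[symmetric]) simp
  also have "\<dots> \<le> (\<Sum>j<n. K * bound j)"
  proof (intro sum_mono)
    fix j
    have "0 \<le> bound j"
      unfolding bound_def mass_def f_def by (auto split: nat.split intro!: sum_nonneg divide_nonneg_nonneg)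
    have "(\<Sum>t\<in>B j. if t \<in> E then f t else 0) = (\<Sum>t\<in>{s\<in>E. int j * int y < s \<and> s \<le> int j * int y + int y}. f t)"
      by (simp add: sum.inter_filter[symmetric] B_def algebra_simps conj_commute)
    also have "\<dots> \<le> real (card {s\<in>E. int j * int y < s \<and> s \<le> int j * int y + int y}) * bound j"
      using pmf_srw_block_le[OF assms(1,2)] unfolding f_def bound_def mass_def B_def
      by (intro sum_bounded_above) (auto simp: algebra_simps)
    also have "\<dots> \<le> K * bound j"
      using count[of "int j * int y"] \<open>0 \<le> bound j\<close> by (intro mult_right_mono) simp_all
    finally show "(\<Sum>t\<in>B j. if t \<in> E then f t else 0) \<le> K * bound j" .
  qed
  also have "\<dots> \<le> K * (1 / sqrt n + 2 / real y)"
  proof -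
    obtain m where m: "n = Suc m" using assms(1) by (cases n) auto
    have "(\<Sum>j<n. bound j) = 1 / sqrt n + (\<Sum>i<m. mass i) / real y"
      unfolding m sum.lessThan_Suc_shift bound_def by (simp add: sum_divide_distrib)
    also have "(\<Sum>i<m. mass i) \<le> (\<Sum>i<n. mass i)"
      unfolding mass_def f_def m by (intro sum_mono2) (auto intro: sum_nonneg)
    also have "\<dots> \<le> 2"
      unfolding mass_def B_def f_def by (rule sum_blocks_pmf_adjacent_le_2) simp
    finally have "(\<Sum>j<n. bound j) \<le> 1 / sqrt n + 2 / real y"
      using assms(2) by (simp add: divide_right_mono)
    then show ?thesis
      using \<open>0 \<le> K\<close> by (simp add: sum_distrib_left[symmetric] mult_left_mono)
  qed
  finally show ?thesis .
qed

section \<open>Selberg's upper bound sieve\<close>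

definition phi_prod :: "nat set \<Rightarrow> real" where
  "phi_prod V = (\<Prod>p\<in>V. real p - 1)"

lemma phi_prod_ge_1:
  assumes "\<And>p. p \<in> V \<Longrightarrow> prime p"
  shows "1 \<le> phi_prod V"
  unfolding phi_prod_def using assms by (intro prod_ge_1) (auto dest: prime_ge_2_nat)

lemma prod_eq_sum_phi_prod:
  assumes "finite I"
  shows "real (\<Prod>I) = (\<Sum>V\<in>Pow I. phi_prod V)"
proof -
  have "real (\<Prod>I) = (\<Prod>p\<in>I. (real p - 1) + 1)" by simp
  also have "\<dots> = (\<Sum>V\<in>Pow I. (\<Prod>p\<in>V. real p - 1) * (\<Prod>p\<in>I - V. 1))"
    by (rule prod_add[OF assms])
  finally show ?thesis unfolding phi_prod_def by simp
qed

lemma prod_primes_dvd_iff: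
  fixes s :: int
  assumes "finite T" "\<And>p. p \<in> T \<Longrightarrow> prime p"
  shows "int (\<Prod>T) dvd s \<longleftrightarrow> (\<forall>p\<in>T. int p dvd s)"
  using assms
proof (induction T rule: finite_induct)
  case (insert p T)
  have "prime p" using insert by auto
  have "\<not> p dvd \<Prod>T"
  proof
    assume "p dvd \<Prod>T"
    then obtain q where "q \<in> T" "p dvd q"
      using prime_dvd_prod_iff[OF insert(1) \<open>prime p\<close>, of id] by auto
    then show False using insert \<open>prime p\<close> primes_dvd_imp_eq by blast
  qed
  then have "coprime p (\<Prod>T)"
    using \<open>prime p\<close> by (intro prime_imp_coprime)
  then have "coprime (int p) (int (\<Prod>T))"
    by (simp only: coprime_int_iff)
  then have "int p * int (\<Prod>T) dvd s \<longleftrightarrow> int p dvd s \<and> int (\<Prod>T) dvd s"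
    by (auto intro: divides_mult dest: dvd_mult_left dvd_mult_right)
  moreover have "int (\<Prod>(insert p T)) = int p * int (\<Prod>T)"
    using insert by (simp del: of_nat_prod)
  ultimately show ?case using insert by (simp del: of_nat_prod)
qed simp

lemma prime_factors_prod_primes:
  assumes "finite U" "\<And>p. p \<in> U \<Longrightarrow> prime p"
  shows "prime_factors (\<Prod>U) = U"
proof -
  have "0 \<notin> U" using assms(2) not_prime_0 by blast
  then show ?thesis using assms by (subst prime_factors_prod) (auto simp: prime_prime_factors)
qed

lemma sum_supersets_alternating:
  fixes U V :: "'a set"
  assumes "finite U" "V \<subseteq> U"
  shows "(\<Sum>T\<in>Pow U. if V \<subseteq> T then (-1::real) ^ card T else 0) = (if U = V then (-1) ^ card V else 0)"
proof -
  have "(\<Sum>T\<in>Pow U. if V \<subseteq> T then (-1::real) ^ card T else 0) = (\<Sum>T\<in>{T. T \<subseteq> U \<and> V \<subseteq> T}. (-1) ^ card T)"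
    using assms by (subst sum.inter_filter[symmetric]) (auto intro: sum.cong)
  also have "\<dots> = (if U = V then (-1) ^ card V else 0)"
  proof (cases "U = V")
    case True
    then have "{T. T \<subseteq> U \<and> V \<subseteq> T} = {V}" by auto
    then show ?thesis using True by simp
  next
    case False
    then have "V \<subset> U" using assms by auto
    show ?thesis
      using False card_subsupersets_even_odd[OF assms(1) \<open>V \<subset> U\<close>] assms(1)
      by (simp add: sum_alternating_cancels conj_assoc)
  qed
  finally show ?thesis .
qed

text \<open>A squarefree number \<open>d\<close> all of whose prime factors lie in \<open>S\<close> is represented by the set
  \<open>U \<subseteq> S\<close> of its prime factors, so that \<open>d = \<Prod>U\<close> and \<open>\<phi>(d) = phi_prod U\<close>.\<close>

locale selberg_sieve =
  fixes S :: "nat set" and R :: nat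
  assumes finite_S: "finite S" and prime_S: "\<And>p. p \<in> S \<Longrightarrow> prime p" and R_ge_1: "1 \<le> R"
begin

definition admissible :: "nat set set" where
  "admissible = {U. U \<subseteq> S \<and> \<Prod>U \<le> R}"

definition G :: real where
  "G = (\<Sum>U\<in>admissible. 1 / phi_prod U)"

text \<open>Selberg's optimal weights
  \<open>\<lambda>\<^sub>d = \<mu>(d) d \<Sum>\<^bsub>d | e, e \<le> R\<^esub> 1 / (\<phi>(e) G)\<close>, at which the quadratic form
  \<open>\<Sum> \<lambda>\<^sub>d\<^sub>1 \<lambda>\<^sub>d\<^sub>2 / lcm d\<^sub>1 d\<^sub>2\<close> attains its minimum \<open>1 / G\<close> under \<open>\<lambda>\<^sub>1 = 1\<close>.\<close>

definition dual_weight :: "nat set \<Rightarrow> real" where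
  "dual_weight U = (if U \<in> admissible then 1 / (phi_prod U * G) else 0)"

definition weight :: "nat set \<Rightarrow> real" where
  "weight T = real (\<Prod>T) * (-1) ^ card T * (\<Sum>U\<in>Pow S. if T \<subseteq> U then dual_weight U else 0)"

definition weight_sum :: "int \<Rightarrow> real" where
  "weight_sum s = (\<Sum>T\<in>Pow S. if int (\<Prod>T) dvd s then weight T else 0)"

lemma finite_subset_S: "U \<subseteq> S \<Longrightarrow> finite U"
  using finite_S finite_subset by blast

lemma prod_subset_S_pos: "U \<subseteq> S \<Longrightarrow> 0 < \<Prod>U"
  using finite_subset_S prime_S by (auto intro!: prod_pos simp: prime_gt_0_nat)

lemma real_prod_subset_S_pos: "U \<subseteq> S \<Longrightarrow> 0 < real (\<Prod>U)"
  using prod_subset_S_pos by (simp only: of_nat_0_less_iff)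

lemma phi_prod_subset_S_ge_1: "U \<subseteq> S \<Longrightarrow> 1 \<le> phi_prod U"
  using prime_S by (intro phi_prod_ge_1) auto

lemma finite_admissible: "finite admissible"
  unfolding admissible_def using finite_S by (simp add: finite_subset[of _ "Pow S"] subset_eq)

lemma G_ge_1: "1 \<le> G"
proof -
  have "{} \<in> admissible" unfolding admissible_def using R_ge_1 by auto
  then have "G = 1 + (\<Sum>U\<in>admissible - {{}}. 1 / phi_prod U)"
    unfolding G_def using finite_admissible by (simp add: sum.remove phi_prod_def)
  moreover have "0 \<le> (\<Sum>U\<in>admissible - {{}}. 1 / phi_prod U)"
    by (intro sum_nonneg) (auto simp: admissible_def dest!: phi_prod_subset_S_ge_1)
  ultimately show ?thesis by simp
qed

lemma G_eq_sum_Pow: "G = (\<Sum>U\<in>Pow S. if \<Prod>U \<le> R then 1 / phi_prod U else 0)"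
proof -
  have "admissible = {U\<in>Pow S. \<Prod>U \<le> R}" unfolding admissible_def by auto
  then have "G = (\<Sum>U\<in>{U\<in>Pow S. \<Prod>U \<le> R}. 1 / phi_prod U)" by (simp only: G_def)
  also have "\<dots> = (\<Sum>U\<in>Pow S. if \<Prod>U \<le> R then 1 / phi_prod U else 0)"
    using finite_S by (intro sum.inter_filter) simp
  finally show ?thesis .
qed

lemma dual_weight_nonneg: "0 \<le> dual_weight U"
  unfolding dual_weight_def using G_ge_1 phi_prod_subset_S_ge_1
  by (auto simp: admissible_def intro!: divide_nonneg_nonneg mult_nonneg_nonneg
           order_trans[OF zero_le_one phi_prod_subset_S_ge_1])

lemma sum_dual_weight: "(\<Sum>U\<in>Pow S. dual_weight U) = 1"
proof -
  have "(\<Sum>U\<in>Pow S. dual_weight U) = (\<Sum>U\<in>admissible. dual_weight U)"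
    using finite_S by (intro sum.mono_neutral_right) (auto simp: dual_weight_def admissible_def)
  also have "\<dots> = (\<Sum>U\<in>admissible. 1 / phi_prod U) / G"
    unfolding dual_weight_def by (simp add: sum_divide_distrib)
  finally show ?thesis using G_ge_1 unfolding G_def by simp
qed

lemma weight_empty: "weight {} = 1"
  using sum_dual_weight unfolding weight_def by simp

lemma sum_Pow_S_if_subset:
  assumes "U \<subseteq> S"
  shows "(\<Sum>T\<in>Pow S. if T \<subseteq> U then h T else 0) = (\<Sum>T\<in>Pow U. (h T :: real))"
proof -
  have "(\<Sum>T\<in>Pow S. if T \<subseteq> U then h T else 0) = (\<Sum>T\<in>{T\<in>Pow S. T \<subseteq> U}. h T)"
    using finite_S by (intro sum.inter_filter[symmetric]) auto
  also have "{T\<in>Pow S. T \<subseteq> U} = Pow U" using assms by auto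
  finally show ?thesis .
qed

lemma sum_weight_div_prod_supersets:
  assumes "V \<subseteq> S"
  shows "(\<Sum>T\<in>Pow S. if V \<subseteq> T then weight T / real (\<Prod>T) else 0) = (-1) ^ card V * dual_weight V"
proof -
  have "(\<Sum>T\<in>Pow S. if V \<subseteq> T then weight T / real (\<Prod>T) else 0)
      = (\<Sum>T\<in>Pow S. \<Sum>U\<in>Pow S. if V \<subseteq> T \<and> T \<subseteq> U then (-1) ^ card T * dual_weight U else 0)"
  proof (rule sum.cong[OF refl])
    fix T assume "T \<in> Pow S"
    then have "0 < real (\<Prod>T)" using real_prod_subset_S_pos by blast
    then have "weight T / real (\<Prod>T) = (-1) ^ card T * (\<Sum>U\<in>Pow S. if T \<subseteq> U then dual_weight U else 0)"
      unfolding weight_def by simp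
    then show "(if V \<subseteq> T then weight T / real (\<Prod>T) else 0)
        = (\<Sum>U\<in>Pow S. if V \<subseteq> T \<and> T \<subseteq> U then (-1) ^ card T * dual_weight U else 0)"
      by (auto simp: sum_distrib_left intro!: sum.cong)
  qed
  also have "\<dots> = (\<Sum>U\<in>Pow S. dual_weight U * (\<Sum>T\<in>Pow S. if T \<subseteq> U then (if V \<subseteq> T then (-1) ^ card T else 0) else 0))"
    by (subst sum.swap) (auto simp: sum_distrib_left intro!: sum.cong)
  also have "\<dots> = (\<Sum>U\<in>Pow S. if U = V then dual_weight V * (-1) ^ card V else 0)"
  proof (rule sum.cong[OF refl])
    fix U assume U: "U \<in> Pow S"
    have "(\<Sum>T\<in>Pow S. if T \<subseteq> U then (if V \<subseteq> T then (-1::real) ^ card T else 0) else 0)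
        = (\<Sum>T\<in>Pow U. if V \<subseteq> T then (-1) ^ card T else 0)"
      using U by (subst sum_Pow_S_if_subset) auto
    also have "\<dots> = (if U = V then (-1) ^ card V else 0)"
    proof (cases "V \<subseteq> U")
      case True
      then show ?thesis using U finite_subset_S by (simp add: sum_supersets_alternating)
    next
      case False
      then have "U \<noteq> V" "\<forall>T\<in>Pow U. \<not> V \<subseteq> T" by auto
      then show ?thesis by simp
    qed
    finally show "dual_weight U * (\<Sum>T\<in>Pow S. if T \<subseteq> U then (if V \<subseteq> T then (-1) ^ card T else 0) else 0)
        = (if U = V then dual_weight V * (-1) ^ card V else 0)" by simp
  qed
  also have "\<dots> = (-1) ^ card V * dual_weight V" using assms finite_S by simp
  finally show ?thesis .
qed

lemma weight_product_div_lcm: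
  assumes "T1 \<subseteq> S" "T2 \<subseteq> S"
  shows "weight T1 * weight T2 / real (\<Prod>(T1 \<union> T2))
    = (weight T1 / real (\<Prod>T1)) * (weight T2 / real (\<Prod>T2))
        * (\<Sum>V\<in>Pow S. if V \<subseteq> T1 \<and> V \<subseteq> T2 then phi_prod V else 0)"
proof -
  have "(\<Prod>(T1 \<union> T2)) * (\<Prod>(T1 \<inter> T2)) = (\<Prod>T1) * (\<Prod>T2)"
    using assms finite_subset_S by (intro prod.union_inter) auto
  then have "real (\<Prod>(T1 \<union> T2)) * real (\<Prod>(T1 \<inter> T2)) = real (\<Prod>T1) * real (\<Prod>T2)"
    by (metis of_nat_mult)
  moreover have "real (\<Prod>T1) > 0" "real (\<Prod>T2) > 0" "real (\<Prod>(T1 \<union> T2)) > 0"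
    using real_prod_subset_S_pos assms by (meson Un_subset_iff)+
  ultimately have "weight T1 * weight T2 / real (\<Prod>(T1 \<union> T2))
      = (weight T1 / real (\<Prod>T1)) * (weight T2 / real (\<Prod>T2)) * real (\<Prod>(T1 \<inter> T2))"
    by (simp add: field_simps)
  also have "real (\<Prod>(T1 \<inter> T2)) = (\<Sum>V\<in>Pow (T1 \<inter> T2). phi_prod V)"
    using assms finite_subset_S by (intro prod_eq_sum_phi_prod) auto
  also have "\<dots> = (\<Sum>V\<in>Pow S. if V \<subseteq> T1 \<inter> T2 then phi_prod V else 0)"
    using assms by (subst sum_Pow_S_if_subset) auto
  finally show ?thesis by simp
qed

lemma weight_quadratic_form:
  "(\<Sum>T1\<in>Pow S. \<Sum>T2\<in>Pow S. weight T1 * weight T2 / real (\<Prod>(T1 \<union> T2))) = 1 / G"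
proof -
  define a where "a T = weight T / real (\<Prod>T)" for T
  have "(\<Sum>T1\<in>Pow S. \<Sum>T2\<in>Pow S. weight T1 * weight T2 / real (\<Prod>(T1 \<union> T2)))
      = (\<Sum>T1\<in>Pow S. \<Sum>T2\<in>Pow S. a T1 * a T2 * (\<Sum>V\<in>Pow S. if V \<subseteq> T1 \<and> V \<subseteq> T2 then phi_prod V else 0))"
    unfolding a_def by (intro sum.cong refl weight_product_div_lcm) auto
  also have "\<dots> = (\<Sum>T1\<in>Pow S. \<Sum>T2\<in>Pow S. \<Sum>V\<in>Pow S. if V \<subseteq> T1 \<and> V \<subseteq> T2 then phi_prod V * a T1 * a T2 else 0)"
    by (auto simp: sum_distrib_left intro!: sum.cong)
  also have "\<dots> = (\<Sum>V\<in>Pow S. \<Sum>T1\<in>Pow S. \<Sum>T2\<in>Pow S. if V \<subseteq> T1 \<and> V \<subseteq> T2 then phi_prod V * a T1 * a T2 else 0)"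
    by (subst sum.swap, subst (2) sum.swap) (rule refl)
  also have "\<dots> = (\<Sum>V\<in>Pow S. phi_prod V * (\<Sum>T1\<in>Pow S. if V \<subseteq> T1 then a T1 else 0)
                                         * (\<Sum>T2\<in>Pow S. if V \<subseteq> T2 then a T2 else 0))"
    by (intro sum.cong refl) (auto simp: sum_distrib_left sum_distrib_right intro!: sum.cong)
  also have "\<dots> = (\<Sum>V\<in>Pow S. phi_prod V * dual_weight V ^ 2)"
  proof (intro sum.cong refl)
    fix V assume "V \<in> Pow S"
    then have "(\<Sum>T\<in>Pow S. if V \<subseteq> T then a T else 0) = (-1) ^ card V * dual_weight V"
      unfolding a_def by (intro sum_weight_div_prod_supersets) auto
    then show "phi_prod V * (\<Sum>T1\<in>Pow S. if V \<subseteq> T1 then a T1 else 0) * (\<Sum>T2\<in>Pow S. if V \<subseteq> T2 then a T2 else 0)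
        = phi_prod V * dual_weight V ^ 2"
      by (simp add: power2_eq_square algebra_simps flip: power_add)
  qed
  also have "\<dots> = (\<Sum>V\<in>admissible. (1 / phi_prod V) / G ^ 2)"
  proof (rule sum.mono_neutral_cong_right)
    fix V assume "V \<in> admissible"
    then have "1 \<le> phi_prod V" using phi_prod_subset_S_ge_1 by (auto simp: admissible_def)
    then show "phi_prod V * dual_weight V ^ 2 = (1 / phi_prod V) / G ^ 2"
      using \<open>V \<in> admissible\<close> G_ge_1 by (simp add: dual_weight_def power2_eq_square field_simps)
  qed (use finite_S in \<open>auto simp: dual_weight_def admissible_def\<close>)
  also have "\<dots> = G / G ^ 2" unfolding G_def by (simp add: sum_divide_distrib)
  also have "\<dots> = 1 / G" using G_ge_1 by (simp add: power2_eq_square)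
  finally show ?thesis .
qed

lemma prod_subset_S_dvd_iff: "T \<subseteq> S \<Longrightarrow> int (\<Prod>T) dvd s \<longleftrightarrow> (\<forall>p\<in>T. int p dvd s)"
  using prime_S finite_subset_S by (intro prod_primes_dvd_iff) auto

lemma weight_sum_eq_1:
  assumes "\<forall>p\<in>S. \<not> int p dvd s"
  shows "weight_sum s = 1"
proof -
  have "weight_sum s = (\<Sum>T\<in>Pow S. if T = {} then weight T else 0)"
    unfolding weight_sum_def
  proof (intro sum.cong refl)
    fix T assume "T \<in> Pow S"
    then show "(if int (\<Prod>T) dvd s then weight T else 0) = (if T = {} then weight T else 0)"
      using prod_subset_S_dvd_iff[of T s] assms by auto
  qed
  then show ?thesis using finite_S weight_empty by simp
qed

lemma sum_weight_sum_sq: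
  assumes "finite A"
  shows "(\<Sum>s\<in>A. weight_sum s ^ 2)
    = (\<Sum>T1\<in>Pow S. \<Sum>T2\<in>Pow S. weight T1 * weight T2 * real (card {s\<in>A. int (\<Prod>(T1 \<union> T2)) dvd s}))"
proof -
  have "weight_sum s ^ 2
      = (\<Sum>T1\<in>Pow S. \<Sum>T2\<in>Pow S. if int (\<Prod>(T1 \<union> T2)) dvd s then weight T1 * weight T2 else 0)" for s
  proof -
    have "weight_sum s ^ 2 = (\<Sum>T1\<in>Pow S. \<Sum>T2\<in>Pow S.
        (if int (\<Prod>T1) dvd s then weight T1 else 0) * (if int (\<Prod>T2) dvd s then weight T2 else 0))"
      unfolding weight_sum_def power2_eq_square sum_product by simp
    also have "\<dots> = (\<Sum>T1\<in>Pow S. \<Sum>T2\<in>Pow S. if int (\<Prod>(T1 \<union> T2)) dvd s then weight T1 * weight T2 else 0)"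
    proof (intro sum.cong refl)
      fix T1 T2 assume "T1 \<in> Pow S" "T2 \<in> Pow S"
      then have "int (\<Prod>(T1 \<union> T2)) dvd s \<longleftrightarrow> int (\<Prod>T1) dvd s \<and> int (\<Prod>T2) dvd s"
        using prod_subset_S_dvd_iff[of T1 s] prod_subset_S_dvd_iff[of T2 s] prod_subset_S_dvd_iff[of "T1 \<union> T2" s]
        by auto
      then show "(if int (\<Prod>T1) dvd s then weight T1 else 0) * (if int (\<Prod>T2) dvd s then weight T2 else 0)
          = (if int (\<Prod>(T1 \<union> T2)) dvd s then weight T1 * weight T2 else 0)" by auto
    qed
    finally show ?thesis .
  qed
  then have "(\<Sum>s\<in>A. weight_sum s ^ 2)
      = (\<Sum>s\<in>A. \<Sum>T1\<in>Pow S. \<Sum>T2\<in>Pow S. if int (\<Prod>(T1 \<union> T2)) dvd s then weight T1 * weight T2 else 0)"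
    by simp
  also have "\<dots> = (\<Sum>T1\<in>Pow S. \<Sum>T2\<in>Pow S. \<Sum>s\<in>A. if int (\<Prod>(T1 \<union> T2)) dvd s then weight T1 * weight T2 else 0)"
    by (subst sum.swap, rule sum.cong[OF refl], rule sum.swap)
  also have "\<dots> = (\<Sum>T1\<in>Pow S. \<Sum>T2\<in>Pow S. weight T1 * weight T2 * real (card {s\<in>A. int (\<Prod>(T1 \<union> T2)) dvd s}))"
    using assms by (intro sum.cong refl) (simp add: sum.inter_filter[symmetric] mult.commute)
  finally show ?thesis .
qed

lemma card_admissible_le: "card admissible \<le> R"
proof -
  have "inj_on Prod admissible"
  proof (rule inj_onI)
    fix U1 U2 assume "U1 \<in> admissible" "U2 \<in> admissible" "\<Prod>U1 = \<Prod>U2"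
    moreover have "prime_factors (\<Prod>U) = U" if "U \<subseteq> S" for U
      using that finite_subset_S prime_S by (intro prime_factors_prod_primes) auto
    ultimately show "U1 = U2" by (metis admissible_def mem_Collect_eq)
  qed
  moreover have "Prod ` admissible \<subseteq> {1..R}"
    using prod_subset_S_pos by (auto simp: admissible_def Suc_le_eq)
  ultimately show ?thesis using card_mono[of "{1..R}" "Prod ` admissible"] card_image by fastforce
qed

lemma weight_eq_0:
  assumes "T \<subseteq> S" "T \<notin> admissible"
  shows "weight T = 0"
proof -
  have "dual_weight U = 0" if "U \<subseteq> S" "T \<subseteq> U" for U
  proof -
    have "\<Prod>T dvd \<Prod>U" using that finite_subset_S by (intro prod_dvd_prod_subset) auto
    then have "\<Prod>T \<le> \<Prod>U" using prod_subset_S_pos[of U] that by (intro dvd_imp_le) auto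
    then show ?thesis using assms by (auto simp: admissible_def dual_weight_def)
  qed
  then show ?thesis unfolding weight_def by (auto intro!: sum.neutral)
qed

lemma abs_weight_le:
  assumes "T \<in> admissible"
  shows "\<bar>weight T\<bar> \<le> R"
proof -
  have "0 \<le> (\<Sum>U\<in>Pow S. if T \<subseteq> U then dual_weight U else 0)"
    using dual_weight_nonneg by (intro sum_nonneg) auto
  moreover have "(\<Sum>U\<in>Pow S. if T \<subseteq> U then dual_weight U else 0) \<le> (\<Sum>U\<in>Pow S. dual_weight U)"
    using dual_weight_nonneg by (intro sum_mono) auto
  moreover have "\<Prod>T \<le> R" using assms by (simp add: admissible_def)
  then have "real (\<Prod>T) \<le> real R" by (simp only: of_nat_le_iff)
  ultimately have "real (\<Prod>T) * \<bar>\<Sum>U\<in>Pow S. if T \<subseteq> U then dual_weight U else 0\<bar> \<le> real R * 1"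
    using sum_dual_weight by (intro mult_mono) auto
  moreover have "\<bar>real (\<Prod>T)\<bar> = real (\<Prod>T)" by (rule abs_of_nonneg) (simp only: of_nat_0_le_iff)
  ultimately show ?thesis unfolding weight_def abs_mult by simp
qed

lemma sum_abs_weight_le: "(\<Sum>T\<in>Pow S. \<bar>weight T\<bar>) \<le> real R ^ 2"
proof -
  have "(\<Sum>T\<in>Pow S. \<bar>weight T\<bar>) = (\<Sum>T\<in>admissible. \<bar>weight T\<bar>)"
    using finite_S weight_eq_0 by (intro sum.mono_neutral_right) (auto simp: admissible_def)
  also have "\<dots> \<le> card admissible * real R"
    using abs_weight_le sum_bounded_above by (metis (no_types, lifting))
  also have "\<dots> \<le> real R * real R" using card_admissible_le by (intro mult_right_mono) auto
  finally show ?thesis by (simp add: power2_eq_square)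
qed

theorem selberg_upper_bound:
  assumes "finite A"
    and count: "\<And>T. T \<subseteq> S \<Longrightarrow> \<bar>real (card {s\<in>A. int (\<Prod>T) dvd s}) - X / real (\<Prod>T)\<bar> \<le> 1"
  shows "(\<Sum>s\<in>A. weight_sum s ^ 2) \<le> X / G + real R ^ 4"
proof -
  define r where "r T = real (card {s\<in>A. int (\<Prod>T) dvd s}) - X / real (\<Prod>T)" for T
  have "(\<Sum>s\<in>A. weight_sum s ^ 2)
      = X * (\<Sum>T1\<in>Pow S. \<Sum>T2\<in>Pow S. weight T1 * weight T2 / real (\<Prod>(T1 \<union> T2)))
        + (\<Sum>T1\<in>Pow S. \<Sum>T2\<in>Pow S. weight T1 * weight T2 * r (T1 \<union> T2))"
    unfolding sum_weight_sum_sq[OF assms(1)] r_def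
    by (simp add: sum_distrib_left sum.distrib[symmetric] algebra_simps)
  also have "(\<Sum>T1\<in>Pow S. \<Sum>T2\<in>Pow S. weight T1 * weight T2 * r (T1 \<union> T2))
      \<le> (\<Sum>T1\<in>Pow S. \<Sum>T2\<in>Pow S. \<bar>weight T1\<bar> * \<bar>weight T2\<bar>)"
  proof (intro sum_mono)
    fix T1 T2 assume "T1 \<in> Pow S" "T2 \<in> Pow S"
    then have "\<bar>r (T1 \<union> T2)\<bar> \<le> 1" using count[of "T1 \<union> T2"] unfolding r_def by auto
    then have "\<bar>weight T1 * weight T2 * r (T1 \<union> T2)\<bar> \<le> \<bar>weight T1\<bar> * \<bar>weight T2\<bar> * 1"
      unfolding abs_mult by (intro mult_left_mono) auto
    then show "weight T1 * weight T2 * r (T1 \<union> T2) \<le> \<bar>weight T1\<bar> * \<bar>weight T2\<bar>" by simp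
  qed
  also have "(\<Sum>T1\<in>Pow S. \<Sum>T2\<in>Pow S. \<bar>weight T1\<bar> * \<bar>weight T2\<bar>) = (\<Sum>T\<in>Pow S. \<bar>weight T\<bar>) ^ 2"
    by (simp add: power2_eq_square sum_product)
  also have "\<dots> \<le> (real R ^ 2) ^ 2"
    using sum_abs_weight_le by (intro power_mono) (auto intro: sum_nonneg)
  finally show ?thesis unfolding weight_quadratic_form by simp
qed

end

section \<open>A lower bound for Selberg's \<open>G\<close>\<close>

lemma sum_inverse_squares_le: "1 \<le> N \<Longrightarrow> (\<Sum>k=1..N. 1 / real k ^ 2) \<le> 2 - 1 / real N"
proof (induction N rule: nat_induct_at_least)
  case (Suc N)
  have "1 / (real N + 1) ^ 2 \<le> 1 / (real N * (real N + 1))"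
    using Suc by (intro divide_left_mono) (auto simp: power2_eq_square)
  also have "\<dots> = 1 / real N - 1 / (real N + 1)" using Suc by (simp add: field_simps)
  finally show ?case using Suc by (simp add: add.commute)
qed simp

lemma prod_prime_factors_squarefree:
  fixes d :: nat
  assumes "squarefree d"
  shows "\<Prod>(prime_factors d) = d"
proof -
  have "d \<noteq> 0" using assms by (metis not_squarefree_0)
  then have "d = (\<Prod>p\<in>prime_factors d. p ^ multiplicity p d)"
    using prod_prime_factors[of d] by simp
  also have "\<dots> = (\<Prod>p\<in>prime_factors d. p)"
    using assms squarefree_factorial_semiring'[OF \<open>d \<noteq> 0\<close>] by (intro prod.cong) auto
  finally show ?thesis by simp
qed

text \<open>Every \<open>m\<close> is uniquely \<open>d k\<^sup>2\<close> with \<open>d\<close> squarefree, and \<open>\<Sum> 1 / k\<^sup>2 \<le> 2\<close>.\<close>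

lemma harm_le_sum_squarefree:
  assumes "1 \<le> R"
  shows "harm R \<le> 2 * (\<Sum>d\<in>{d\<in>{1..R}. squarefree d}. 1 / real d)"
proof -
  define D where "D = {d\<in>{1..R}. squarefree d}"
  define decomp where "decomp m = (squarefree_part m, square_part m)" for m :: nat
  define g where "g p = 1 / (real (fst p) * real (snd p) ^ 2)" for p :: "nat \<times> nat"
  have dec: "m = squarefree_part m * square_part m ^ 2" for m :: nat by (rule squarefree_decompose)
  have "inj_on decomp {1..R}"
    by (rule inj_onI) (metis dec decomp_def prod.inject)
  have "decomp ` {1..R} \<subseteq> D \<times> {1..R}"
  proof
    fix p assume "p \<in> decomp ` {1..R}"
    then obtain m where m: "m \<in> {1..R}" "p = decomp m" by auto
    have "squarefree_part m dvd m" "square_part m ^ 2 dvd m"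
      by (metis dec dvd_triv_left, metis dec dvd_triv_right)
    then have "squarefree_part m \<le> m" "square_part m ^ 2 \<le> m"
      using m by (auto intro: dvd_imp_le)
    moreover have "square_part m \<le> square_part m ^ 2" by (simp add: power2_eq_square le_square)
    moreover have "square_part m \<noteq> 0" using m by simp
    then have "1 \<le> square_part m" by linarith
    moreover have "1 \<le> squarefree_part m" using squarefree_part_nonzero[of m] by linarith
    ultimately show "p \<in> D \<times> {1..R}"
      using m by (auto simp: D_def decomp_def)
  qed
  have "harm R = (\<Sum>m\<in>{1..R}. g (decomp m))"
  proof -
    have "1 / real m = g (decomp m)" for m
      using dec[of m] unfolding g_def decomp_def by (metis fst_conv snd_conv of_nat_mult of_nat_power)
    then show ?thesis unfolding harm_def by (simp add: divide_inverse)
  qed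
  also have "\<dots> = (\<Sum>p\<in>decomp ` {1..R}. g p)"
    using sum.reindex[OF \<open>inj_on decomp {1..R}\<close>, of g] by simp
  also have "\<dots> \<le> (\<Sum>p\<in>D \<times> {1..R}. g p)"
    using \<open>decomp ` {1..R} \<subseteq> D \<times> {1..R}\<close> by (intro sum_mono2) (auto simp: D_def g_def)
  also have "\<dots> = (\<Sum>d\<in>D. \<Sum>k=1..R. g (d, k))"
    by (simp add: sum.cartesian_product)
  also have "\<dots> = (\<Sum>d\<in>D. 1 / real d * (\<Sum>k=1..R. 1 / real k ^ 2))"
    unfolding g_def by (simp add: sum_distrib_left)
  also have "\<dots> \<le> (\<Sum>d\<in>D. 1 / real d * 2)"
  proof (intro sum_mono mult_left_mono)
    have "0 \<le> 1 / real R" by simp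
    then show "(\<Sum>k=1..R. 1 / real k ^ 2) \<le> 2" using sum_inverse_squares_le[OF assms] by linarith
  qed simp
  finally show ?thesis unfolding D_def by (simp add: sum_distrib_left mult.commute)
qed

lemma sum_squarefree_le_sum_inverse_phi_prod:
  shows "(\<Sum>d\<in>{d\<in>{1..R}. squarefree d}. 1 / real d)
     \<le> (\<Sum>V\<in>Pow {p. prime p \<and> p \<le> R}. if \<Prod>V \<le> R then 1 / phi_prod V else 0)"
proof -
  define P where "P = {p. prime p \<and> p \<le> R}"
  define X where "X = {V\<in>Pow P. \<Prod>V \<le> R}"
  have "finite X" unfolding X_def P_def by simp
  have "{d\<in>{1..R}. squarefree d} \<subseteq> Prod ` X"
  proof
    fix d assume d: "d \<in> {d\<in>{1..R}. squarefree d}"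
    have "prime_factors d \<subseteq> P"
    proof
      fix p assume "p \<in> prime_factors d"
      then have "prime p" "p \<le> d" using d by (auto simp: in_prime_factors_iff dvd_imp_le)
      then show "p \<in> P" using d unfolding P_def by auto
    qed
    then show "d \<in> Prod ` X"
      using d prod_prime_factors_squarefree unfolding X_def by (auto intro!: image_eqI[of _ _ "prime_factors d"])
  qed
  then have "(\<Sum>d\<in>{d\<in>{1..R}. squarefree d}. 1 / real d) \<le> (\<Sum>d\<in>Prod ` X. 1 / real d)"
    using \<open>finite X\<close> by (intro sum_mono2) auto
  also have "\<dots> \<le> sum ((\<lambda>d. 1 / real d) \<circ> Prod) X"
    by (rule sum_image_le[OF \<open>finite X\<close>]) (simp add: prod_nonneg)
  also have "\<dots> = (\<Sum>V\<in>X. 1 / real (\<Prod>V))" by (simp add: o_def)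
  also have "\<dots> \<le> (\<Sum>V\<in>X. 1 / phi_prod V)"
  proof (intro sum_mono)
    fix V assume "V \<in> X"
    then have primes: "prime p" if "p \<in> V" for p using that unfolding X_def P_def by auto
    then have "1 \<le> phi_prod V" by (intro phi_prod_ge_1)
    moreover have "1 \<le> real p" if "p \<in> V" for p using prime_ge_1_nat[OF primes[OF that]] by simp
    then have "phi_prod V \<le> real (\<Prod>V)" unfolding phi_prod_def by (auto intro!: prod_mono)
    ultimately show "1 / real (\<Prod>V) \<le> 1 / phi_prod V" by (intro divide_left_mono) auto
  qed
  also have "\<dots> = (\<Sum>V\<in>Pow P. if \<Prod>V \<le> R then 1 / phi_prod V else 0)"
    unfolding X_def P_def by (intro sum.inter_filter) auto
  finally show ?thesis unfolding P_def .
qed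

lemma sum_Pow_inverse_phi_prod:
  assumes "finite Q" "\<And>p. p \<in> Q \<Longrightarrow> prime p"
  shows "(\<Sum>W\<in>Pow Q. 1 / phi_prod W) = (\<Prod>p\<in>Q. real p / (real p - 1))"
proof -
  have "(\<Prod>p\<in>Q. 1 / (real p - 1) + 1) = (\<Sum>W\<in>Pow Q. (\<Prod>p\<in>W. 1 / (real p - 1)) * (\<Prod>p\<in>Q - W. 1))"
    by (rule prod_add[OF assms(1)])
  moreover have "1 / (real p - 1) + 1 = real p / (real p - 1)" if "p \<in> Q" for p
    using prime_ge_2_nat[OF assms(2)[OF that]] by (simp add: field_simps)
  ultimately show ?thesis unfolding phi_prod_def by (simp add: prod_dividef)
qed

lemma sum_inverse_phi_prod_union_le:
  assumes "finite S" "finite Q" "S \<inter> Q = {}" "\<And>p. p \<in> S \<union> Q \<Longrightarrow> prime p"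
  shows "(\<Sum>V\<in>Pow (S \<union> Q). if \<Prod>V \<le> R then 1 / phi_prod V else 0)
     \<le> (\<Sum>U\<in>Pow S. if \<Prod>U \<le> R then 1 / phi_prod U else 0) * (\<Sum>W\<in>Pow Q. 1 / phi_prod W)"
proof -
  define h where "h V = (if \<Prod>V \<le> R then 1 / phi_prod V else 0)" for V
  have phi_nonneg: "0 \<le> phi_prod V" if "V \<subseteq> S \<union> Q" for V
    using phi_prod_ge_1[of V] assms(4) that by (auto intro: order_trans[OF zero_le_one])
  have "Pow (S \<union> Q) = (\<lambda>(U, W). U \<union> W) ` (Pow S \<times> Pow Q)"
    by (auto simp: image_def Pow_def) (metis Int_Un_distrib Int_absorb2 Int_lower2)
  moreover have "inj_on (\<lambda>(U, W). U \<union> W) (Pow S \<times> Pow Q)"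
    by (rule inj_on_inverseI[where g = "\<lambda>V. (V \<inter> S, V \<inter> Q)"]) (use assms(3) in auto)
  ultimately have "(\<Sum>V\<in>Pow (S \<union> Q). h V) = (\<Sum>(U, W)\<in>Pow S \<times> Pow Q. h (U \<union> W))"
    by (simp add: sum.reindex case_prod_unfold)
  also have "\<dots> \<le> (\<Sum>(U, W)\<in>Pow S \<times> Pow Q. h U * (1 / phi_prod W))"
  proof (intro sum_mono, clarify)
    fix U W assume "U \<subseteq> S" "W \<subseteq> Q"
    then have "finite U" "finite W" "U \<inter> W = {}" using assms finite_subset by auto
    then have "1 / phi_prod (U \<union> W) = 1 / phi_prod U * (1 / phi_prod W)"
      unfolding phi_prod_def by (simp add: prod.union_disjoint)
    moreover have "\<Prod>U \<le> \<Prod>(U \<union> W)"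
      using \<open>finite U\<close> \<open>finite W\<close> \<open>U \<subseteq> S\<close> \<open>W \<subseteq> Q\<close> assms(4)
      by (intro dvd_imp_le prod_dvd_prod_subset) (auto intro!: prod_pos simp: prime_gt_0_nat)
    moreover have "0 \<le> phi_prod U" "0 \<le> phi_prod W"
      using phi_nonneg \<open>U \<subseteq> S\<close> \<open>W \<subseteq> Q\<close> by auto
    ultimately show "h (U \<union> W) \<le> h U * (1 / phi_prod W)"
      unfolding h_def by auto
  qed
  also have "\<dots> = (\<Sum>U\<in>Pow S. h U) * (\<Sum>W\<in>Pow Q. 1 / phi_prod W)"
    by (simp add: sum_product sum.cartesian_product case_prod_unfold)
  finally show ?thesis unfolding h_def .
qed

lemma prod_prime_divisors_le_div_totient:
  fixes q :: nat
  assumes "1 \<le> q" "Q \<subseteq> prime_factors q"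
  shows "(\<Prod>p\<in>Q. real p / (real p - 1)) \<le> real q / real (totient q)"
proof -
  define F where "F = prime_factors q"
  have ge_2: "2 \<le> real p" if "p \<in> F" for p
  proof -
    have "prime p" using that in_prime_factors_imp_prime unfolding F_def by blast
    then show ?thesis using prime_ge_2_nat[of p] by simp
  qed
  then have factor: "0 < 1 - 1 / real p" "1 - 1 / real p \<le> 1" if "p \<in> F" for p
    using ge_2[OF that] by (simp_all add: divide_less_eq_1)
  have "(\<Prod>p\<in>F. 1 - 1 / real p) = (\<Prod>p\<in>Q. 1 - 1 / real p) * (\<Prod>p\<in>F - Q. 1 - 1 / real p)"
    using prod.subset_diff[of Q F] assms(2) unfolding F_def by (simp add: mult.commute)
  also have "\<dots> \<le> (\<Prod>p\<in>Q. 1 - 1 / real p)"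
    using factor assms(2) unfolding F_def
    by (intro mult_left_le prod_le_1 prod_nonneg) (auto simp: less_imp_le)
  finally have le: "(\<Prod>p\<in>F. 1 - 1 / real p) \<le> (\<Prod>p\<in>Q. 1 - 1 / real p)" .
  have pos: "0 < (\<Prod>p\<in>F. 1 - 1 / real p)" using factor by (intro prod_pos) auto
  have "(\<Prod>p\<in>Q. real p / (real p - 1)) = (\<Prod>p\<in>Q. 1 / (1 - 1 / real p))"
    using ge_2 assms(2) unfolding F_def by (intro prod.cong refl) (force simp: field_simps)
  also have "\<dots> = 1 / (\<Prod>p\<in>Q. 1 - 1 / real p)" by (simp add: prod_dividef)
  also have "\<dots> \<le> 1 / (\<Prod>p\<in>F. 1 - 1 / real p)" using le pos by (intro divide_left_mono) auto
  also have "\<dots> = real q / real (totient q)"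
    unfolding totient_formula2[of q] F_def using assms pos[unfolded F_def] by simp
  finally show ?thesis .
qed

lemma sum_inverse_phi_prod_coprime_ge:
  fixes q R :: nat
  assumes "1 \<le> q" "1 \<le> R"
  shows "real (totient q) / real q * ln (real R + 1) / 2
    \<le> (\<Sum>U\<in>Pow {p. prime p \<and> p \<le> R \<and> \<not> p dvd q}. if \<Prod>U \<le> R then 1 / phi_prod U else 0)"
proof -
  define S where "S = {p. prime p \<and> p \<le> R \<and> \<not> p dvd q}"
  define Q where "Q = {p. prime p \<and> p \<le> R \<and> p dvd q}"
  define H where "H = (\<Sum>U\<in>Pow S. if \<Prod>U \<le> R then 1 / phi_prod U else 0)"
  have "0 \<le> H"
    unfolding H_def S_def using phi_prod_ge_1 by (intro sum_nonneg) (auto intro: order_trans[OF zero_le_one])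
  have "{p. prime p \<and> p \<le> R} = S \<union> Q" unfolding S_def Q_def by auto
  have "ln (real R + 1) \<le> harm R" by (rule ln_le_harm)
  also have "\<dots> \<le> 2 * (\<Sum>d\<in>{d\<in>{1..R}. squarefree d}. 1 / real d)"
    using assms(2) by (rule harm_le_sum_squarefree)
  also have "\<dots> \<le> 2 * (\<Sum>V\<in>Pow (S \<union> Q). if \<Prod>V \<le> R then 1 / phi_prod V else 0)"
    using sum_squarefree_le_sum_inverse_phi_prod[of R] \<open>{p. prime p \<and> p \<le> R} = S \<union> Q\<close> by simp
  also have "\<dots> \<le> 2 * (H * (\<Sum>W\<in>Pow Q. 1 / phi_prod W))"
    unfolding H_def S_def Q_def by (intro mult_left_mono sum_inverse_phi_prod_union_le) auto
  also have "\<dots> = 2 * (H * (\<Prod>p\<in>Q. real p / (real p - 1)))"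
    unfolding Q_def by (subst sum_Pow_inverse_phi_prod) auto
  also have "\<dots> \<le> 2 * (H * (real q / real (totient q)))"
    using \<open>0 \<le> H\<close> assms(1)
    by (intro mult_left_mono prod_prime_divisors_le_div_totient) (auto simp: Q_def in_prime_factors_iff)
  finally have "ln (real R + 1) \<le> 2 * (H * (real q / real (totient q)))" .
  moreover have "0 < real (totient q)" "0 < real q" using assms by auto
  ultimately show ?thesis unfolding H_def S_def by (simp add: field_simps)
qed

section \<open>Primes in a progression and a short interval\<close>

lemma card_nat_affine_less_bounds:
  fixes c M :: int and y :: nat
  assumes "0 < M" "0 \<le> c" "c < M"
  shows "\<bar>real (card {k::nat. c + M * int k < int y}) - real y / real_of_int M\<bar> \<le> 1"
proof -
  define K where "K = {k::nat. c + M * int k < int y}"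
  have "K \<subseteq> {..< nat \<lceil>real y / M\<rceil>}"
  proof
    fix k assume "k \<in> K"
    then have "M * int k < int y" using assms unfolding K_def by auto
    then have "real_of_int M * real k < real y"
      by (metis of_int_less_iff of_int_mult of_int_of_nat_eq)
    then have "real k < real y / M" using assms by (simp add: field_simps)
    then have "int k < \<lceil>real y / M\<rceil>" by linarith
    then show "k \<in> {..< nat \<lceil>real y / M\<rceil>}" by simp
  qed
  moreover have "{..< nat \<lceil>(real y - c) / M\<rceil>} \<subseteq> K"
  proof
    fix k assume "k \<in> {..< nat \<lceil>(real y - c) / M\<rceil>}"
    then have "int k < \<lceil>(real y - c) / M\<rceil>" by simp
    then have "real k < (real y - c) / M" by linarith
    then have "real_of_int (c + M * int k) < real_of_int (int y)" using assms by (simp add: field_simps)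
    then have "c + M * int k < int y" by (simp only: of_int_less_iff)
    then show "k \<in> K" unfolding K_def by simp
  qed
  ultimately have "nat \<lceil>(real y - c) / M\<rceil> \<le> card K" "card K \<le> nat \<lceil>real y / M\<rceil>"
    using card_mono[of "{..< nat \<lceil>real y / M\<rceil>}" K] card_mono[of K "{..< nat \<lceil>(real y - c) / M\<rceil>}"]
      finite_subset by auto
  moreover have "real y / M - 1 \<le> (real y - c) / M" using assms by (simp add: field_simps)
  moreover have "0 \<le> real y / M" using assms by simp
  ultimately have "real y / M - 1 \<le> real (card K)" "real (card K) \<le> real y / M + 1"
    by linarith+
  then show ?thesis unfolding K_def by linarith
qed

lemma card_cong_interval_bounds:
  fixes M x b :: int and y :: nat
  assumes "0 < M"
  shows "\<bar>real (card {s. x < s \<and> s \<le> x + int y \<and> [s = b] (mod M)}) - real y / real_of_int M\<bar> \<le> 1"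
proof -
  define c where "c = (b - x - 1) mod M"
  have c: "0 \<le> c" "c < M" using assms unfolding c_def by auto
  define K where "K = {k::nat. c + M * int k < int y}"
  define h where "h k = x + 1 + c + M * int k" for k
  have "{s. x < s \<and> s \<le> x + int y \<and> [s = b] (mod M)} = h ` K"
  proof (intro equalityI subsetI)
    fix s assume s: "s \<in> {s. x < s \<and> s \<le> x + int y \<and> [s = b] (mod M)}"
    then have "[s - x - 1 = b - x - 1] (mod M)" by (intro cong_diff) auto
    then have "[s - x - 1 = c] (mod M)" unfolding c_def cong_def by simp
    then obtain t where t: "s - x - 1 - c = M * t"
      by (metis cong_iff_dvd_diff dvdE)
    have "0 \<le> t"
    proof (rule ccontr)
      assume "\<not> 0 \<le> t"
      then have "M * t \<le> M * (-1)" using assms by (intro mult_left_mono) auto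
      then show False using t s c by simp
    qed
    then have "s = h (nat t)" "nat t \<in> K"
      using t s unfolding h_def K_def by auto
    then show "s \<in> h ` K" by blast
  next
    fix s assume "s \<in> h ` K"
    then obtain k where k: "k \<in> K" "s = h k" by auto
    have "[c = b - x - 1] (mod M)" unfolding c_def cong_def by simp
    then have "[(x + 1) + c = (x + 1) + (b - x - 1)] (mod M)" by (intro cong_add) auto
    then have "[x + 1 + c + M * int k = b + 0] (mod M)" by (intro cong_add) (auto simp: cong_0_iff)
    then have "[s = b] (mod M)" unfolding k h_def by simp
    moreover have "c + M * int k < int y" "s = x + 1 + c + M * int k"
      using k unfolding K_def h_def by simp_all
    moreover have "0 \<le> M * int k" using assms by simp
    ultimately have "x < s" "s \<le> x + int y" "[s = b] (mod M)" using c by linarith+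
    then show "s \<in> {s. x < s \<and> s \<le> x + int y \<and> [s = b] (mod M)}" by simp
  qed
  moreover have "inj_on h K" unfolding h_def inj_on_def using assms by auto
  ultimately have "card {s. x < s \<and> s \<le> x + int y \<and> [s = b] (mod M)} = card K"
    by (simp add: card_image)
  then show ?thesis using card_nat_affine_less_bounds[OF assms c] unfolding K_def by simp
qed

lemma cong_and_dvd_iff_cong:
  fixes m d a :: int
  assumes "coprime m d"
  obtains b where "\<And>s. [s = a] (mod m) \<and> d dvd s \<longleftrightarrow> [s = b] (mod m * d)"
proof -
  obtain b where b: "[b = a] (mod m)" "[b = 0] (mod d)"
    using binary_chinese_remainder_int[OF assms] by blast
  have "[s = a] (mod m) \<and> d dvd s \<longleftrightarrow> [s = b] (mod m * d)" for s
  proof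
    assume "[s = a] (mod m) \<and> d dvd s"
    then have "[s = b] (mod m)" "[s = b] (mod d)"
      using b by (auto simp: cong_0_iff[symmetric] intro: cong_trans cong_sym)
    then show "[s = b] (mod m * d)" using assms by (rule coprime_cong_mult)
  next
    assume "[s = b] (mod m * d)"
    then have "[s = b] (mod m)" "[s = b] (mod d)" by (auto elim: cong_dvd_modulus)
    then show "[s = a] (mod m) \<and> d dvd s"
      using b by (auto simp: cong_0_iff[symmetric] intro: cong_trans)
  qed
  then show ?thesis using that by blast
qed

lemma card_cong_dvd_interval_bounds:
  fixes q d :: nat and x a :: int and y :: nat
  assumes "1 \<le> q" "1 \<le> d" "coprime q d"
  shows "\<bar>real (card {s. x < s \<and> s \<le> x + int y \<and> [s = a] (mod int q) \<and> int d dvd s})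
    - real y / real q / real d\<bar> \<le> 1"
proof -
  obtain b where b: "\<And>s. [s = a] (mod int q) \<and> int d dvd s \<longleftrightarrow> [s = b] (mod int q * int d)"
    using cong_and_dvd_iff_cong[of "int q" "int d" a] assms(3) by auto
  then have "{s. x < s \<and> s \<le> x + int y \<and> [s = a] (mod int q) \<and> int d dvd s}
      = {s. x < s \<and> s \<le> x + int y \<and> [s = b] (mod int q * int d)}" by blast
  moreover have "0 < int q * int d" using assms by simp
  ultimately show ?thesis using card_cong_interval_bounds[of "int q * int d" x y b] by simp
qed

lemma card_primes_le_card_sifted:
  fixes A :: "int set" and S :: "nat set"
  assumes "finite A" "\<And>p. p \<in> S \<Longrightarrow> prime p \<and> p \<le> R"
  shows "card {s\<in>A. prime s} \<le> R + card {s\<in>A. \<forall>p\<in>S. \<not> int p dvd s}"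
proof -
  have "{s\<in>A. prime s} \<subseteq> {1..int R} \<union> {s\<in>A. \<forall>p\<in>S. \<not> int p dvd s}"
  proof
    fix s assume s: "s \<in> {s\<in>A. prime s}"
    show "s \<in> {1..int R} \<union> {s\<in>A. \<forall>p\<in>S. \<not> int p dvd s}"
    proof (cases "s \<le> int R")
      case True
      then show ?thesis using s prime_ge_2_int[of s] by auto
    next
      case False
      have "\<not> int p dvd s" if "p \<in> S" for p
        using that s False assms(2)[OF that] primes_dvd_imp_eq[of "int p" s] by auto
      then show ?thesis using s by auto
    qed
  qed
  then have "card {s\<in>A. prime s} \<le> card ({1..int R} \<union> {s\<in>A. \<forall>p\<in>S. \<not> int p dvd s})"
    using assms(1) by (intro card_mono) auto
  also have "\<dots> \<le> R + card {s\<in>A. \<forall>p\<in>S. \<not> int p dvd s}"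
    using card_Un_le[of "{1..int R}"] by simp
  finally show ?thesis .
qed

theorem card_primes_cong_interval_le:
  fixes q y R :: nat and a x :: int
  assumes "1 \<le> q" "1 \<le> R"
  shows "real (card {s. x < s \<and> s \<le> x + int y \<and> prime s \<and> [s = a] (mod int q)})
     \<le> real R + real R ^ 4 + 2 * real y / (real (totient q) * ln (real R + 1))"
proof -
  define S where "S = {p. prime p \<and> p \<le> R \<and> \<not> p dvd q}"
  interpret selberg_sieve S R unfolding S_def using assms by unfold_locales auto
  define A where "A = {s. x < s \<and> s \<le> x + int y \<and> [s = a] (mod int q)}"
  define B where "B = {s\<in>A. \<forall>p\<in>S. \<not> int p dvd s}"
  have "finite A" unfolding A_def by (rule finite_subset[of _ "{x<..x + int y}"]) auto
  then have "card {s\<in>A. prime s} \<le> R + card B"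
    unfolding B_def by (rule card_primes_le_card_sifted) (simp add: S_def)
  then have "real (card {s\<in>A. prime s}) \<le> real R + real (card B)"
    by (simp only: of_nat_add[symmetric] of_nat_le_iff)
  also have "real (card B) = (\<Sum>s\<in>B. weight_sum s ^ 2)"
    using weight_sum_eq_1 unfolding B_def by simp
  also have "\<dots> \<le> (\<Sum>s\<in>A. weight_sum s ^ 2)"
    using \<open>finite A\<close> unfolding B_def by (intro sum_mono2) auto
  also have "\<dots> \<le> (real y / real q) / G + real R ^ 4"
  proof (rule selberg_upper_bound[OF \<open>finite A\<close>])
    fix T assume "T \<subseteq> S"
    then have "coprime q (\<Prod>T)"
      unfolding S_def by (intro prod_coprime_right) (auto simp: prime_imp_coprime coprime_commute)
    then show "\<bar>real (card {s\<in>A. int (\<Prod>T) dvd s}) - real y / real q / real (\<Prod>T)\<bar> \<le> 1"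
      using card_cong_dvd_interval_bounds[of q "\<Prod>T" x y a] assms prod_subset_S_pos[OF \<open>T \<subseteq> S\<close>]
      unfolding A_def by (simp add: conj_assoc)
  qed
  also have "(real y / real q) / G \<le> 2 * real y / (real (totient q) * ln (real R + 1))"
  proof -
    have "real (totient q) / real q * ln (real R + 1) / 2 \<le> G"
      using sum_inverse_phi_prod_coprime_ge[OF assms] G_eq_sum_Pow unfolding S_def by simp
    moreover have "0 < real q" "0 < real (totient q) / real q * ln (real R + 1) / 2"
      using assms by auto
    ultimately have "(real y / real q) / G \<le> (real y / real q) / (real (totient q) / real q * ln (real R + 1) / 2)"
      using G_ge_1 by (intro divide_left_mono mult_pos_pos) auto
    also have "\<dots> = 2 * real y / (real (totient q) * ln (real R + 1))"
      using \<open>0 < real q\<close> by (simp add: field_simps)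
    finally show ?thesis .
  qed
  finally show ?thesis unfolding A_def by (simp add: conj_ac)
qed

lemma sieve_level_bounds:
  fixes t :: real
  assumes "1 \<le> t"
  defines "R \<equiv> nat \<lfloor>t powr (1/16)\<rfloor>"
  shows "1 \<le> R" "real R + real R ^ 4 \<le> 2 * t powr (1/4)" "ln t / 16 \<le> ln (real R + 1)"
proof -
  define u where "u = t powr (1/16)"
  have "1 \<le> u" unfolding u_def using assms by (intro ge_one_powr_ge_zero) auto
  then have u: "real R \<le> u" "u \<le> real R + 1" unfolding R_def u_def by linarith+
  then show "1 \<le> R" using \<open>1 \<le> u\<close> unfolding R_def u_def by linarith
  have "real R ^ 4 \<le> u ^ 4" using u by (intro power_mono) auto
  also have "u ^ 4 = t powr (1/4)" unfolding u_def using assms by (subst powr_power) auto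
  finally have "real R ^ 4 \<le> t powr (1/4)" .
  moreover have "u \<le> t powr (1/4)" unfolding u_def using assms by (intro powr_mono) auto
  ultimately show "real R + real R ^ 4 \<le> 2 * t powr (1/4)" using u by linarith
  have "ln t / 16 = ln u" unfolding u_def using assms by (simp add: ln_powr)
  also have "\<dots> \<le> ln (real R + 1)" using u \<open>1 \<le> u\<close> by simp
  finally show "ln t / 16 \<le> ln (real R + 1)" .
qed

text \<open>The sieve level \<open>R = n\<^sup>1\<^sup>/\<^sup>1\<^sup>6\<close> makes the error term \<open>R\<^sup>4\<close> of order \<open>n\<^sup>1\<^sup>/\<^sup>4\<close>, which the
  hypothesis on \<open>q\<close> makes negligible against the main term \<open>\<surd>n / (\<phi>(q) log n)\<close>.\<close>

lemma card_primes_cong_sqrt_interval_le: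
  fixes \<epsilon> :: real and q n :: nat and a x :: int
  assumes "0 < \<epsilon>" "1 \<le> q" "2 \<le> n" "real q \<le> real n powr (1/4 - \<epsilon>)"
  shows "real (card {s. x < s \<and> s \<le> x + int (nat \<lceil>sqrt n\<rceil>) \<and> prime s \<and> [s = a] (mod int q)})
     \<le> (32 + 2 / \<epsilon>) * real (nat \<lceil>sqrt n\<rceil>) / (real (totient q) * ln n)"
proof -
  define y where "y = nat \<lceil>sqrt n\<rceil>"
  define R where "R = nat \<lfloor>real n powr (1/16)\<rfloor>"
  define D where "D = real (totient q) * ln n"
  have R: "1 \<le> R" "real R + real R ^ 4 \<le> 2 * real n powr (1/4)" "ln n / 16 \<le> ln (real R + 1)"
    using sieve_level_bounds[of "real n"] assms(3) unfolding R_def by auto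
  have "0 < ln n" "1 \<le> real (totient q)" "real (totient q) \<le> real q"
    using assms(2,3) totient_le[of q] by (auto simp: Suc_le_eq)
  then have "0 < D" unfolding D_def by simp
  have "D * real n powr (1/4) \<le> real n powr (1/4 - \<epsilon>) * (real n powr \<epsilon> / \<epsilon>) * real n powr (1/4)"
    unfolding D_def using assms \<open>0 < ln n\<close> \<open>real (totient q) \<le> real q\<close> ln_powr_bound[of "real n" \<epsilon>]
    by (intro mult_right_mono mult_mono) auto
  also have "\<dots> = sqrt n / \<epsilon>"
    using assms(3) by (simp add: powr_add[symmetric] powr_half_sqrt)
  also have "\<dots> \<le> real y / \<epsilon>" unfolding y_def using assms(1) by (intro divide_right_mono) auto
  finally have "real n powr (1/4) \<le> real y / \<epsilon> / D"
    using \<open>0 < D\<close> assms(1) by (simp add: field_simps)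
  then have "real R + real R ^ 4 \<le> 2 * (real y / \<epsilon> / D)"
    using R(2) by linarith
  moreover have "2 * real y / (real (totient q) * ln (real R + 1))
      \<le> 2 * real y / (real (totient q) * (ln n / 16))"
    using R \<open>0 < ln n\<close> \<open>1 \<le> real (totient q)\<close> assms(2)
    by (intro divide_left_mono mult_left_mono mult_pos_pos) auto
  moreover have "2 * real y / (real (totient q) * (ln n / 16)) = 32 * real y / D"
    unfolding D_def by (simp add: field_simps)
  moreover have "2 * (real y / \<epsilon> / D) + 32 * real y / D = (32 + 2 / \<epsilon>) * real y / D"
    using assms(1) \<open>0 < D\<close> by (simp add: field_simps)
  ultimately show ?thesis
    using card_primes_cong_interval_le[OF assms(2) R(1), of x y a]
    unfolding y_def[symmetric] D_def[symmetric] by linarith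
qed

lemma prob_srw_prime_cong_le:
  fixes \<epsilon> :: real and q n :: nat and a :: int
  assumes "0 < \<epsilon>" "1 \<le> q" "2 \<le> n" "real q \<le> real n powr (1/4 - \<epsilon>)"
  shows "measure_pmf.prob (srw n) {s. prime s \<and> [s = a] (mod int q)}
    \<le> 6 * (32 + 2 / \<epsilon>) / (real (totient q) * ln n)"
proof -
  define y where "y = nat \<lceil>sqrt n\<rceil>"
  define K where "K = (32 + 2 / \<epsilon>) * real y / (real (totient q) * ln n)"
  have "1 \<le> sqrt n" using assms(3) by simp
  have "sqrt n \<le> real y" "real y \<le> 2 * sqrt n"
    unfolding y_def using \<open>1 \<le> sqrt n\<close> by linarith+
  then have "0 < y" using \<open>1 \<le> sqrt n\<close> by (metis of_nat_0_less_iff order_less_le_trans zero_less_one)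
  have "measure_pmf.prob (srw n) {s. prime s \<and> [s = a] (mod int q)} \<le> K * (1 / sqrt n + 2 / real y)"
  proof (rule prob_srw_le_interval_count)
    show "{s. prime s \<and> [s = a] (mod int q)} \<subseteq> {0<..}" using prime_gt_0_int by auto
    show "real (card {s\<in>{s. prime s \<and> [s = a] (mod int q)}. x < s \<and> s \<le> x + int y}) \<le> K" for x
      using card_primes_cong_sqrt_interval_le[OF assms, of x a] unfolding K_def y_def by (simp add: conj_ac)
  qed (use assms(3) \<open>0 < y\<close> in auto)
  also have "\<dots> \<le> K * (3 / sqrt n)"
  proof (intro mult_left_mono)
    have "2 / real y \<le> 2 / sqrt n"
      using \<open>sqrt n \<le> real y\<close> \<open>1 \<le> sqrt n\<close> \<open>0 < y\<close> by (intro divide_left_mono) auto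
    then show "1 / sqrt n + 2 / real y \<le> 3 / sqrt n" by simp
    show "0 \<le> K" unfolding K_def using assms by simp
  qed
  also have "\<dots> = 3 * (32 + 2 / \<epsilon>) * (real y / sqrt n) / (real (totient q) * ln n)"
    unfolding K_def by (simp add: field_simps)
  also have "\<dots> \<le> 3 * (32 + 2 / \<epsilon>) * 2 / (real (totient q) * ln n)"
    using \<open>real y \<le> 2 * sqrt n\<close> \<open>1 \<le> sqrt n\<close> assms
    by (intro divide_right_mono mult_left_mono) (auto simp: field_simps)
  also have "\<dots> = 6 * (32 + 2 / \<epsilon>) / (real (totient q) * ln n)" by simp
  finally show ?thesis .
qed

theorem theorem1p1:
  fixes \<epsilon> :: real
  assumes "0 < \<epsilon>" and "\<epsilon> \<le> 1/4"
  shows "\<exists>C. \<forall>(q::nat) (a::int) (n::nat).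
           odd q \<and> q \<ge> 1 \<and> coprime a (int q) \<and> n \<ge> 2 \<and> real q \<le> real n powr (1/4 - \<epsilon>) \<longrightarrow>
           measure_pmf.prob (srw n) {s. prime s \<and> [s = a] (mod int q)}
             \<le> C * (1 / real (totient q)) * (1 / ln (real n))"
  using prob_srw_prime_cong_le[OF assms(1)] by (intro exI[of _ "6 * (32 + 2 / \<epsilon>)"]) auto

end
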